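(* Let $q$ be a prime power, $1\le\ell\le q$ an integer, and $\omega_1,\omega_2\in(0,1-\ell/q)$. Let $A,B,T\subseteq\mathbb{F}_q$ each have size $\ell$, and let $X_1\sim\mathrm{Unif}(A)$, $X_2\sim\mathrm{Unif}(B)$, $Y_1\sim\mathrm{Unif}(\mathbb{F}_q\setminus A)$, $Y_2\sim\mathrm{Unif}(\mathbb{F}_q\setminus B)$ be independent. Then $$(1-\omega_1)(1-\omega_2)\Pr[X_1+X_2\in T]+\omega_1(1-\omega_2)\Pr[X_1+Y_2\in T]+\omega_2(1-\omega_1)\Pr[Y_1+X_2\in T]+\omega_1\omega_2\Pr[Y_1+Y_2\in T]$$ $$\le(1-\omega_1)(1-\omega_2)+\omega_1\omega_2\cdot\frac{\ell}{q-\ell}.$$ *)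

theory Defs
  imports "HOL-Probability.Probability"
begin

definition sum_in_prob :: "'a::plus pmf \<Rightarrow> 'a pmf \<Rightarrow> 'a set \<Rightarrow> real" where
  "sum_in_prob P Q T = measure_pmf.prob (pair_pmf P Q) {p. fst p + snd p \<in> T}"

end

theory Submission
  imports Defs
begin

text \<open>Write N(X, Y) for the number of pairs (x, y) in X \<times> Y with x + y \<in> T. Every translate
  of T has l elements, so N(X, F) = N(F, X) = l |X| for the whole field F, and all four counts
  are determined by a = N(A, B): the two mixed ones equal l^2 - a, and
  N(F - A, F - B) = (q - l) l - l^2 + a. The left-hand side minus the right-hand side is then
  (a - l^2) c1 c2 with ci = (1 - wi) / l - wi / (q - l), which is positive exactly when
  wi < 1 - l / q, while a \<le> l^2.\<close>

lemma pair_pmf_of_set: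
  assumes "finite X" "X \<noteq> {}" "finite Y" "Y \<noteq> {}"
  shows "pair_pmf (pmf_of_set X) (pmf_of_set Y) = pmf_of_set (X \<times> Y)"
proof (rule pmf_eqI)
  fix p :: "'a \<times> 'b"
  show "pmf (pair_pmf (pmf_of_set X) (pmf_of_set Y)) p = pmf (pmf_of_set (X \<times> Y)) p"
    using assms by (cases p) (simp add: pmf_pair indicator_def card_cartesian_product)
qed

definition sum_in_count :: "'a::plus set \<Rightarrow> 'a set \<Rightarrow> 'a set \<Rightarrow> nat" where
  "sum_in_count T X Y = card {p \<in> X \<times> Y. fst p + snd p \<in> T}"

lemma sum_in_prob_pmf_of_set:
  assumes "finite X" "X \<noteq> {}" "finite Y" "Y \<noteq> {}"
  shows "sum_in_prob (pmf_of_set X) (pmf_of_set Y) T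
           = sum_in_count T X Y / (card X * card Y)"
proof -
  have "X \<times> Y \<inter> {p. fst p + snd p \<in> T} = {p \<in> X \<times> Y. fst p + snd p \<in> T}"
    by blast
  then show ?thesis
    using assms
    by (simp add: sum_in_prob_def sum_in_count_def pair_pmf_of_set measure_pmf_of_set
                  card_cartesian_product)
qed

lemma card_add_left_preimage:
  fixes T :: "'a::group_add set"
  assumes "finite T"
  shows "card {y. x + y \<in> T} = card T"
proof -
  have "{y. x + y \<in> T} = (\<lambda>t. - x + t) ` T"
    by (force simp: add.assoc[symmetric])
  then show ?thesis
    by (simp add: card_image inj_on_def)
qed

lemma card_add_right_preimage:
  fixes T :: "'a::group_add set"
  assumes "finite T"
  shows "card {x. x + y \<in> T} = card T"
proof -
  have "{x. x + y \<in> T} = (\<lambda>t. t - y) ` T"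
    by (force simp: diff_add_cancel)
  then show ?thesis
    by (simp add: card_image inj_on_def)
qed

lemma sum_in_count_UNIV_right:
  fixes T X :: "'a::{finite,group_add} set"
  shows "sum_in_count T X UNIV = card X * card T"
proof -
  have "{p \<in> X \<times> UNIV. fst p + snd p \<in> T} = (SIGMA x:X. {y. x + y \<in> T})"
    by auto
  then show ?thesis
    by (simp add: sum_in_count_def card_add_left_preimage)
qed

lemma sum_in_count_UNIV_left:
  fixes T Y :: "'a::{finite,group_add} set"
  shows "sum_in_count T UNIV Y = card Y * card T"
proof -
  have "{p \<in> UNIV \<times> Y. fst p + snd p \<in> T} = prod.swap ` (SIGMA y:Y. {x. x + y \<in> T})"
    by force
  then show ?thesis
    by (simp add: sum_in_count_def card_image card_add_right_preimage)
qed

lemma sum_in_count_Diff_right: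
  fixes T X Y :: "'a::{finite,plus} set"
  shows "sum_in_count T X Y + sum_in_count T X (UNIV - Y) = sum_in_count T X UNIV"
proof -
  have "{p \<in> X \<times> UNIV. fst p + snd p \<in> T}
          = {p \<in> X \<times> Y. fst p + snd p \<in> T} \<union> {p \<in> X \<times> (UNIV - Y). fst p + snd p \<in> T}"
    by auto
  then show ?thesis
    unfolding sum_in_count_def by (subst card_Un_disjoint[symmetric]) auto
qed

lemma sum_in_count_Diff_left:
  fixes T X Y :: "'a::{finite,plus} set"
  shows "sum_in_count T X Y + sum_in_count T (UNIV - X) Y = sum_in_count T UNIV Y"
proof -
  have "{p \<in> UNIV \<times> Y. fst p + snd p \<in> T}
          = {p \<in> X \<times> Y. fst p + snd p \<in> T} \<union> {p \<in> (UNIV - X) \<times> Y. fst p + snd p \<in> T}"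
    by auto
  then show ?thesis
    unfolding sum_in_count_def by (subst card_Un_disjoint[symmetric]) auto
qed

lemma mixture_inequality:
  fixes a L q w1 w2 :: real
  assumes "0 < L" "L < q" "a \<le> L\<^sup>2" "w1 < 1 - L / q" "w2 < 1 - L / q"
  shows "(1 - w1) * (1 - w2) * (a / L\<^sup>2)
       + w1 * (1 - w2) * ((L\<^sup>2 - a) / (L * (q - L)))
       + w2 * (1 - w1) * ((L\<^sup>2 - a) / ((q - L) * L))
       + w1 * w2 * (((q - L) * L - (L\<^sup>2 - a)) / (q - L)\<^sup>2)
       \<le> (1 - w1) * (1 - w2) + w1 * w2 * (L / (q - L))"
proof -
  define m where "m = q - L"
  have "m > 0" "w1 < m / (L + m)" "w2 < m / (L + m)"
    using assms by (simp_all add: m_def diff_divide_distrib)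
  define c1 where "c1 = (1 - w1) / L - w1 / m"
  define c2 where "c2 = (1 - w2) / L - w2 / m"
  have "c1 > 0" "c2 > 0"
    using assms(1) \<open>m > 0\<close> \<open>w1 < m / (L + m)\<close> \<open>w2 < m / (L + m)\<close>
    unfolding c1_def c2_def by (simp_all add: field_simps)
  moreover have "(1 - w1) * (1 - w2) * (a / L\<^sup>2)
       + w1 * (1 - w2) * ((L\<^sup>2 - a) / (L * m))
       + w2 * (1 - w1) * ((L\<^sup>2 - a) / (m * L))
       + w1 * w2 * ((m * L - (L\<^sup>2 - a)) / m\<^sup>2)
       = (1 - w1) * (1 - w2) + w1 * w2 * (L / m) + (a - L\<^sup>2) * (c1 * c2)"
    using assms(1) \<open>m > 0\<close> unfolding c1_def c2_def
    by (simp add: field_simps power2_eq_square)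
  moreover have "(a - L\<^sup>2) * (c1 * c2) \<le> 0"
    using assms(3) calculation by (intro mult_nonpos_nonneg) auto
  ultimately show ?thesis
    unfolding m_def by linarith
qed

theorem lemma4p2:
  fixes A B T :: "'a::{finite,field} set" and l :: nat and w1 w2 :: real
  assumes "1 \<le> l" "l \<le> CARD('a)"
    and "0 < w1" "w1 < 1 - real l / real CARD('a)"
    and "0 < w2" "w2 < 1 - real l / real CARD('a)"
    and "card A = l" "card B = l" "card T = l"
  shows "(1 - w1) * (1 - w2) * sum_in_prob (pmf_of_set A) (pmf_of_set B) T
       + w1 * (1 - w2) * sum_in_prob (pmf_of_set A) (pmf_of_set (UNIV - B)) T
       + w2 * (1 - w1) * sum_in_prob (pmf_of_set (UNIV - A)) (pmf_of_set B) T
       + w1 * w2 * sum_in_prob (pmf_of_set (UNIV - A)) (pmf_of_set (UNIV - B)) T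
       \<le> (1 - w1) * (1 - w2) + w1 * w2 * (real l / (real CARD('a) - real l))"
proof -
  define a where "a = real (sum_in_count T A B)"
  have "0 < w1 * real CARD('a)"
    using assms(3) by simp
  then have "l < CARD('a)"
    using assms(4) by (simp add: field_simps)
  have card_Compl: "card (UNIV - A) = CARD('a) - l" "card (UNIV - B) = CARD('a) - l"
    using assms(7,8) by (simp_all add: card_Diff_subset)
  have nonempty: "A \<noteq> {}" "B \<noteq> {}" "UNIV - A \<noteq> {}" "UNIV - B \<noteq> {}"
    using assms(1,7,8) card_Compl \<open>l < CARD('a)\<close>
    by (metis card.empty diff_is_0_eq leD not_one_le_zero)+
  have splits: "sum_in_count T A B + sum_in_count T A (UNIV - B) = l * l"
    "sum_in_count T A B + sum_in_count T (UNIV - A) B = l * l"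
    "sum_in_count T (UNIV - A) B + sum_in_count T (UNIV - A) (UNIV - B) = (CARD('a) - l) * l"
    using sum_in_count_Diff_right[of T A B] sum_in_count_Diff_left[of T A B]
      sum_in_count_Diff_right[of T "UNIV - A" B]
    by (simp_all add: sum_in_count_UNIV_right sum_in_count_UNIV_left card_Compl assms(7-9))
  have counts: "real (sum_in_count T A (UNIV - B)) = (real l)\<^sup>2 - a"
    "real (sum_in_count T (UNIV - A) B) = (real l)\<^sup>2 - a"
    "real (sum_in_count T (UNIV - A) (UNIV - B))
       = (real CARD('a) - real l) * real l - ((real l)\<^sup>2 - a)"
    using splits[THEN arg_cong[where f = real]] \<open>l < CARD('a)\<close>
    unfolding a_def by (simp_all add: power2_eq_square of_nat_diff)
  have "a \<le> (real l)\<^sup>2"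
    using counts(1) by simp
  with mixture_inequality[of "real l" "real CARD('a)" a w1 w2] show ?thesis
    using assms \<open>l < CARD('a)\<close> nonempty card_Compl counts
    by (simp add: sum_in_prob_pmf_of_set a_def[symmetric] of_nat_diff mult.commute power2_eq_square)
qed

end
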